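(* Let $d_2,d_3\ge 2$ and $d_1=d_2d_3-1$. Then the SLOCC maximal states of $\mathbb{C}^{d_1}\otimes\mathbb{C}^{d_2}\otimes\mathbb{C}^{d_3}$ fall into exactly $\min\{d_2,d_3\}$ SLOCC equivalence classes.
   Context: $|\psi\rangle\le_{\mathrm{SLOCC}}|\phi\rangle$ means $(L_1\otimes L_2\otimes L_3)|\phi\rangle=|\psi\rangle$ for some linear operators $L_i$ on $\mathbb{C}^{d_i}$; two states are SLOCC equivalent if each is $\le_{\mathrm{SLOCC}}$ the other (equivalently, they are related by $L_1\otimes L_2\otimes L_3$ with all $L_i$ invertible). A state $|\phi\rangle$ is SLOCC maximal if for every $|\psi\rangle$ in the space, $|\phi\rangle\le_{\mathrm{SLOCC}}|\psi\rangle$ implies $|\psi\rangle\le_{\mathrm{SLOCC}}|\phi\rangle$. *)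

theory Defs
  imports Complex_Main
begin

text \<open>A vector of C^{d1} (x) C^{d2} (x) C^{d3} is represented by its coefficient array
  T i j k (i < d1, j < d2, k < d3), with all entries outside the index box equal to 0.
  A linear operator on C^d is represented by its d x d matrix L a i (a, i < d).\<close>

definition tensor3 :: "nat \<Rightarrow> nat \<Rightarrow> nat \<Rightarrow> (nat \<Rightarrow> nat \<Rightarrow> nat \<Rightarrow> complex) set" where
  "tensor3 d1 d2 d3 = {T. \<forall>i j k. \<not> (i < d1 \<and> j < d2 \<and> k < d3) \<longrightarrow> T i j k = 0}"

definition local_op ::
  "nat \<Rightarrow> nat \<Rightarrow> nat \<Rightarrow> (nat \<Rightarrow> nat \<Rightarrow> complex) \<Rightarrow> (nat \<Rightarrow> nat \<Rightarrow> complex) \<Rightarrow>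
   (nat \<Rightarrow> nat \<Rightarrow> complex) \<Rightarrow> (nat \<Rightarrow> nat \<Rightarrow> nat \<Rightarrow> complex) \<Rightarrow> (nat \<Rightarrow> nat \<Rightarrow> nat \<Rightarrow> complex)" where
  "local_op d1 d2 d3 L1 L2 L3 T = (\<lambda>a b c.
     if a < d1 \<and> b < d2 \<and> c < d3 then
       (\<Sum>i<d1. \<Sum>j<d2. \<Sum>k<d3. L1 a i * L2 b j * L3 c k * T i j k)
     else 0)"

definition slocc_le ::
  "nat \<Rightarrow> nat \<Rightarrow> nat \<Rightarrow> (nat \<Rightarrow> nat \<Rightarrow> nat \<Rightarrow> complex) \<Rightarrow> (nat \<Rightarrow> nat \<Rightarrow> nat \<Rightarrow> complex) \<Rightarrow> bool" where
  "slocc_le d1 d2 d3 \<psi> \<phi> \<longleftrightarrow> (\<exists>L1 L2 L3. local_op d1 d2 d3 L1 L2 L3 \<phi> = \<psi>)"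

definition slocc_equiv ::
  "nat \<Rightarrow> nat \<Rightarrow> nat \<Rightarrow> (nat \<Rightarrow> nat \<Rightarrow> nat \<Rightarrow> complex) \<Rightarrow> (nat \<Rightarrow> nat \<Rightarrow> nat \<Rightarrow> complex) \<Rightarrow> bool" where
  "slocc_equiv d1 d2 d3 \<psi> \<phi> \<longleftrightarrow> slocc_le d1 d2 d3 \<psi> \<phi> \<and> slocc_le d1 d2 d3 \<phi> \<psi>"

definition slocc_maximal ::
  "nat \<Rightarrow> nat \<Rightarrow> nat \<Rightarrow> (nat \<Rightarrow> nat \<Rightarrow> nat \<Rightarrow> complex) \<Rightarrow> bool" where
  "slocc_maximal d1 d2 d3 \<phi> \<longleftrightarrow> \<phi> \<in> tensor3 d1 d2 d3 \<and>
     (\<forall>\<psi>\<in>tensor3 d1 d2 d3. slocc_le d1 d2 d3 \<phi> \<psi> \<longrightarrow> slocc_le d1 d2 d3 \<psi> \<phi>)"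

definition maximal_states :: "nat \<Rightarrow> nat \<Rightarrow> nat \<Rightarrow> (nat \<Rightarrow> nat \<Rightarrow> nat \<Rightarrow> complex) set" where
  "maximal_states d1 d2 d3 = {\<phi>. slocc_maximal d1 d2 d3 \<phi>}"

definition slocc_equiv_rel ::
  "nat \<Rightarrow> nat \<Rightarrow> nat \<Rightarrow> ((nat \<Rightarrow> nat \<Rightarrow> nat \<Rightarrow> complex) \<times> (nat \<Rightarrow> nat \<Rightarrow> nat \<Rightarrow> complex)) set" where
  "slocc_equiv_rel d1 d2 d3 = {(\<phi>, \<psi>). \<phi> \<in> maximal_states d1 d2 d3 \<and> \<psi> \<in> maximal_states d1 d2 d3 \<and>
      slocc_equiv d1 d2 d3 \<phi> \<psi>}"

end

theory Submission
  imports Defs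
begin

text \<open>
  A tensor is viewed through its d1 slices, d2 x d3 matrices; \<open>L1 \<otimes> L2 \<otimes> L3\<close> mixes the
  slices by \<open>L1\<close> and maps each slice X to \<open>L2 X L3\<^sup>T\<close>.  Since \<open>d1 < d2 d3\<close>, the slices of any
  state \<open>\<phi>\<close> are annihilated (for the trace pairing) by some nonzero matrix M.  Writing M in
  rank normal form \<open>P D_r Q\<close> (\<open>D_r\<close> = r leading diagonal ones) and transforming parties 2
  and 3, the slices land in the hyperplane \<open>D_r\<^sup>\<bottom>\<close>, which is exactly the slice span of an
  explicit canonical state \<open>\<Phi>_r\<close>; hence \<open>\<phi> \<le> \<Phi>_r\<close> for some \<open>1 \<le> r \<le> min d2 d3\<close>.
  Conversely, if \<open>\<Phi>_r \<le> \<psi>\<close> then the operators on parties 2 and 3 are invertible and carry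
  the slice span of \<open>\<psi>\<close> onto \<open>D_r\<^sup>\<bottom>\<close>, so \<open>\<Phi>_r\<close> is maximal; and \<open>\<Phi>_s \<le> \<Phi>_r\<close> turns \<open>D_r\<close>
  into a nonzero multiple of \<open>D_s\<close> by invertible matrices, forcing \<open>s \<le> r\<close>.
\<close>

text \<open>A d x d matrix is a function \<open>nat \<Rightarrow> nat \<Rightarrow> complex\<close> of which only the entries with
  both indices below d matter.  \<open>mat_mul d\<close> contracts over an inner index ranging below d.\<close>

definition id_mat :: "nat \<Rightarrow> nat \<Rightarrow> complex" where
  "id_mat i j = (if i = j then 1 else 0)"

definition mat_mul :: "nat \<Rightarrow> (nat \<Rightarrow> nat \<Rightarrow> complex) \<Rightarrow> (nat \<Rightarrow> nat \<Rightarrow> complex) \<Rightarrow> nat \<Rightarrow> nat \<Rightarrow> complex"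
  where "mat_mul d A B = (\<lambda>i j. \<Sum>k<d. A i k * B k j)"

definition inverse_pair :: "nat \<Rightarrow> (nat \<Rightarrow> nat \<Rightarrow> complex) \<Rightarrow> (nat \<Rightarrow> nat \<Rightarrow> complex) \<Rightarrow> bool" where
  "inverse_pair d A A' \<longleftrightarrow> (\<forall>i<d. \<forall>j<d. mat_mul d A A' i j = id_mat i j \<and> mat_mul d A' A i j = id_mat i j)"

lemma id_mat_mult_left: "id_mat i k * x = (if k = i then x else 0)"
  by (simp add: id_mat_def)

lemma id_mat_mult_right: "x * id_mat k i = (if k = i then x else 0)"
  by (simp add: id_mat_def)

lemma id_mat_sym: "id_mat i j = id_mat j i"
  unfolding id_mat_def by auto

lemma sum_id_mat_left: "i < d \<Longrightarrow> (\<Sum>k<d. id_mat i k * f k) = f i"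
  by (simp add: id_mat_mult_left)

lemma sum_id_mat_right: "i < d \<Longrightarrow> (\<Sum>k<d. f k * id_mat k i) = f i"
  by (simp add: id_mat_mult_right)

lemma mat_mul_id_left: "i < d \<Longrightarrow> mat_mul d id_mat B i j = B i j"
  unfolding mat_mul_def by (rule sum_id_mat_left)

lemma mat_mul_id_right: "j < d \<Longrightarrow> mat_mul d A id_mat i j = A i j"
  unfolding mat_mul_def by (rule sum_id_mat_right)

lemma mat_mul_assoc: "mat_mul d (mat_mul e A B) C = mat_mul e A (mat_mul d B C)"
  unfolding mat_mul_def
  by (auto simp: sum_distrib_left sum_distrib_right mult.assoc intro!: ext sum.swap)

lemma inverse_pair_id: "inverse_pair d id_mat id_mat"
  unfolding inverse_pair_def by (simp add: mat_mul_id_left)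

lemma inverse_pair_transpose: "inverse_pair d A A' \<Longrightarrow> inverse_pair d (\<lambda>i j. A j i) (\<lambda>i j. A' j i)"
  unfolding inverse_pair_def mat_mul_def by (simp add: mult.commute id_mat_sym)

lemma mat_mul_cancel_middle:
  assumes "\<forall>i<d. \<forall>j<d. mat_mul d Y Y' i j = id_mat i j"
  shows "mat_mul d (mat_mul d X Y) (mat_mul d Y' X') i j = mat_mul d X X' i j"
proof -
  have "mat_mul d (mat_mul d Y Y') X' k j = X' k j" if "k < d" for k
  proof -
    have "mat_mul d (mat_mul d Y Y') X' k j = (\<Sum>l<d. id_mat k l * X' l j)"
      unfolding mat_mul_def[of d "mat_mul d Y Y'"] using assms that by (intro sum.cong) auto
    then show ?thesis using that by (simp add: sum_id_mat_left)
  qed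
  then have "mat_mul d X (mat_mul d (mat_mul d Y Y') X') i j = mat_mul d X X' i j"
    unfolding mat_mul_def[of d X] by (intro sum.cong) auto
  then show ?thesis by (simp only: mat_mul_assoc)
qed

lemma inverse_pair_mul:
  assumes "inverse_pair d A A'" "inverse_pair d B B'"
  shows "inverse_pair d (mat_mul d A B) (mat_mul d B' A')"
  using assms unfolding inverse_pair_def by (simp add: mat_mul_cancel_middle)

text \<open>A homogeneous linear system with fewer equations (m) than unknowns (n) has a
  nontrivial solution; proved by Gaussian elimination of the last unknown.\<close>
lemma homogeneous_system_nontrivial:
  fixes B :: "nat \<Rightarrow> nat \<Rightarrow> complex"
  assumes "m < n"
  shows "\<exists>v. (\<exists>k<n. v k \<noteq> 0) \<and> (\<forall>i<m. (\<Sum>k<n. B i k * v k) = 0)"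
  using assms
proof (induction m arbitrary: n B)
  case 0
  then show ?case by (rule_tac x="\<lambda>k. 1" in exI) auto
next
  case (Suc m)
  then obtain n' where n': "n = Suc n'" and mn: "m < n'" by (cases n) auto
  show ?case
  proof (cases "\<forall>i<Suc m. B i n' = 0")
    case True
    show ?thesis
      by (rule_tac x="\<lambda>k. if k = n' then 1 else 0" in exI) (auto simp: n' True if_distrib cong: if_cong)
  next
    case False
    then obtain i0 where i0: "i0 < Suc m" "B i0 n' \<noteq> 0" by auto
    text \<open>Use equation \<open>i0\<close> to eliminate the unknown \<open>n'\<close> from the other equations,
      which are renumbered below m by exchanging \<open>i0\<close> and m.\<close>
    define \<sigma> where "\<sigma> i = (if i = i0 then m else i)" for i
    define B2 where "B2 i k = B (\<sigma> i) k - B (\<sigma> i) n' / B i0 n' * B i0 k" for i k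
    obtain w where w1: "\<exists>k<n'. w k \<noteq> 0" and w2: "\<forall>i<m. (\<Sum>k<n'. B2 i k * w k) = 0"
      using Suc.IH[OF mn, of B2] by blast
    define S0 where "S0 = (\<Sum>k<n'. B i0 k * w k)"
    define v where "v k = (if k < n' then w k else if k = n' then - S0 / B i0 n' else 0)" for k
    have sumv: "(\<Sum>k<n. B i k * v k) = (\<Sum>k<n'. B i k * w k) + B i n' * (- S0 / B i0 n')" for i
      by (simp add: n' v_def)
    have "(\<Sum>k<n. B i k * v k) = 0" if i: "i < Suc m" for i
    proof (cases "i = i0")
      case True
      then show ?thesis using sumv[of i] i0 by (simp add: S0_def)
    next
      case False
      define i' where "i' = (if i = m then i0 else i)"
      have i'm: "i' < m" using False i i0 unfolding i'_def by auto
      have si: "\<sigma> i' = i" using False unfolding i'_def \<sigma>_def by auto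
      have "0 = (\<Sum>k<n'. B2 i' k * w k)" using w2 i'm by simp
      also have "\<dots> = (\<Sum>k<n'. B i k * w k - B i n' / B i0 n' * (B i0 k * w k))"
        unfolding B2_def si by (rule sum.cong) (auto simp: algebra_simps)
      also have "\<dots> = (\<Sum>k<n'. B i k * w k) - B i n' / B i0 n' * S0"
        by (simp add: sum_subtractf sum_distrib_left S0_def)
      finally show ?thesis using sumv[of i] by (simp add: field_simps)
    qed
    moreover have "\<exists>k<n. v k \<noteq> 0" using w1 by (auto simp: v_def n')
    ultimately show ?thesis by blast
  qed
qed

text \<open>A square matrix with trivial kernel has a right inverse: each column of the inverse
  solves \<open>A x = e_i\<close>, and such a solution is obtained from a nontrivial solution of
  the d x (d+1) system \<open>[A | e_i]\<close>.\<close>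
lemma right_inverse_if_injective:
  fixes A :: "nat \<Rightarrow> nat \<Rightarrow> complex"
  assumes ker: "\<And>v. (\<forall>i<d. (\<Sum>k<d. A i k * v k) = 0) \<Longrightarrow> (\<forall>k<d. v k = 0)"
  shows "\<exists>R. \<forall>i<d. \<forall>j<d. mat_mul d A R i j = id_mat i j"
proof -
  have "\<exists>x. \<forall>j<d. (\<Sum>k<d. A j k * x k) = id_mat j i" if i: "i < d" for i
  proof -
    define C where "C j k = (if k < d then A j k else id_mat j i)" for j k
    obtain v where v1: "\<exists>k<Suc d. v k \<noteq> 0" and v2: "\<forall>j<d. (\<Sum>k<Suc d. C j k * v k) = 0"
      using homogeneous_system_nontrivial[of d "Suc d" C] by auto
    have v2': "(\<Sum>k<d. A j k * v k) + id_mat j i * v d = 0" if "j < d" for j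
      using v2 that by (simp add: C_def)
    have vd: "v d \<noteq> 0"
    proof
      assume "v d = 0"
      then have "\<forall>k<d. v k = 0" using ker[of v] v2' by auto
      with v1 \<open>v d = 0\<close> show False by (metis less_Suc_eq)
    qed
    have "(\<Sum>k<d. A j k * (- v k / v d)) = id_mat j i" if j: "j < d" for j
    proof -
      have "(\<Sum>k<d. A j k * (- v k / v d)) = - (\<Sum>k<d. A j k * v k) / v d"
        by (simp add: sum_divide_distrib sum_negf)
      also have "\<dots> = id_mat j i"
      proof -
        have "(\<Sum>k<d. A j k * v k) = - (id_mat j i * v d)"
          using v2'[OF j] by (simp add: eq_neg_iff_add_eq_0)
        then show ?thesis using vd by simp
      qed
      finally show ?thesis .
    qed
    then show ?thesis by (intro exI[of _ "\<lambda>k. - v k / v d"]) blast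
  qed
  then obtain X where X: "\<forall>i<d. \<forall>j<d. (\<Sum>k<d. A j k * X i k) = id_mat j i" by metis
  show ?thesis by (rule exI[of _ "\<lambda>k i. X i k"]) (auto simp: mat_mul_def X)
qed

text \<open>A square matrix with trivial kernel is invertible: its right inverse \<open>R\<close> again has
  trivial kernel, so \<open>R\<close> has a right inverse \<open>S\<close>, and \<open>A = A R S = S\<close>.\<close>
lemma inverse_if_injective:
  fixes A :: "nat \<Rightarrow> nat \<Rightarrow> complex"
  assumes ker: "\<And>v. (\<forall>i<d. (\<Sum>k<d. A i k * v k) = 0) \<Longrightarrow> (\<forall>k<d. v k = 0)"
  shows "\<exists>A'. inverse_pair d A A'"
proof -
  obtain R where R: "\<forall>i<d. \<forall>j<d. mat_mul d A R i j = id_mat i j"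
    using right_inverse_if_injective[OF ker] by blast
  have kerR: "\<forall>k<d. v k = 0" if h: "\<forall>i<d. (\<Sum>k<d. R i k * v k) = 0" for v
  proof (intro allI impI)
    fix j assume j: "j < d"
    have "v j = (\<Sum>i<d. id_mat j i * v i)" using j by (simp add: sum_id_mat_left)
    also have "\<dots> = (\<Sum>i<d. mat_mul d A R j i * v i)" using R j by auto
    also have "\<dots> = (\<Sum>k<d. A j k * (\<Sum>i<d. R k i * v i))"
      unfolding mat_mul_def by (simp add: sum_distrib_left sum_distrib_right mult.assoc) (rule sum.swap)
    also have "\<dots> = 0" using h by simp
    finally show "v j = 0" .
  qed
  obtain S where S: "\<forall>i<d. \<forall>j<d. mat_mul d R S i j = id_mat i j"
    using right_inverse_if_injective[of d R] kerR by blast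
  have AS: "A i j = S i j" if "i < d" "j < d" for i j
  proof -
    have "A i j = mat_mul d A id_mat i j" using that by (simp add: mat_mul_id_right)
    also have "\<dots> = mat_mul d A (mat_mul d R S) i j"
      using that S unfolding mat_mul_def by (intro sum.cong) auto
    also have "\<dots> = mat_mul d (mat_mul d A R) S i j" by (simp add: mat_mul_assoc)
    also have "\<dots> = mat_mul d id_mat S i j"
      using that R unfolding mat_mul_def by (intro sum.cong) auto
    also have "\<dots> = S i j" using that by (simp add: mat_mul_id_left)
    finally show ?thesis .
  qed
  have "mat_mul d R A i j = id_mat i j" if "i < d" "j < d" for i j
  proof -
    have "mat_mul d R A i j = mat_mul d R S i j" unfolding mat_mul_def using AS that by (auto intro!: sum.cong)
    then show ?thesis using S that by simp
  qed
  then show ?thesis using R unfolding inverse_pair_def by blast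
qed

lemma inverse_if_left_injective:
  fixes A :: "nat \<Rightarrow> nat \<Rightarrow> complex"
  assumes ker: "\<And>v. (\<forall>i<d. (\<Sum>k<d. A k i * v k) = 0) \<Longrightarrow> (\<forall>k<d. v k = 0)"
  shows "\<exists>A'. inverse_pair d A A'"
proof -
  obtain B where "inverse_pair d (\<lambda>i j. A j i) B"
    using inverse_if_injective[of d "\<lambda>i j. A j i"] ker by blast
  then have "inverse_pair d A (\<lambda>i j. B j i)" using inverse_pair_transpose by fastforce
  then show ?thesis by blast
qed

lemma sum_swap_outer2:
  "(\<Sum>x\<in>X. \<Sum>y\<in>Y. \<Sum>i\<in>I. F x y i) = (\<Sum>i\<in>I. \<Sum>x\<in>X. \<Sum>y\<in>Y. F x y i)"
proof -
  have "(\<Sum>x\<in>X. \<Sum>y\<in>Y. \<Sum>i\<in>I. F x y i) = (\<Sum>x\<in>X. \<Sum>i\<in>I. \<Sum>y\<in>Y. F x y i)"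
    by (intro sum.cong refl sum.swap)
  also have "\<dots> = (\<Sum>i\<in>I. \<Sum>x\<in>X. \<Sum>y\<in>Y. F x y i)" by (rule sum.swap)
  finally show ?thesis .
qed

lemma sum_swap_pairs:
  "(\<Sum>a\<in>A. \<Sum>b\<in>B. \<Sum>c\<in>C. \<Sum>d\<in>D. F a b c d) = (\<Sum>c\<in>C. \<Sum>d\<in>D. \<Sum>a\<in>A. \<Sum>b\<in>B. F a b c d)"
  by (subst sum_swap_outer2) (intro sum.cong refl sum_swap_outer2)

lemma sum_product_2:
  fixes f g :: "nat \<Rightarrow> complex"
  shows "(\<Sum>i\<in>I. f i) * (\<Sum>j\<in>J. g j) * t = (\<Sum>i\<in>I. \<Sum>j\<in>J. f i * g j * t)"
  by (simp add: sum_distrib_left sum_distrib_right mult.assoc) (rule sum.swap)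

section \<open>Slices and the action of local operators on them\<close>

text \<open>The a-th slice of a tensor T is the d2 x d3 matrix \<open>T a\<close>.  The operator
  \<open>L1 \<otimes> L2 \<otimes> L3\<close> acts by mixing slices with \<open>L1\<close> and transforming each slice X into
  \<open>L2 X L3\<^sup>T\<close>; the latter map is \<open>sandwich d2 d3 L2 L3\<close>.\<close>

definition supported :: "nat \<Rightarrow> nat \<Rightarrow> (nat \<Rightarrow> nat \<Rightarrow> complex) \<Rightarrow> bool" where
  "supported d2 d3 X \<longleftrightarrow> (\<forall>j k. \<not> (j < d2 \<and> k < d3) \<longrightarrow> X j k = 0)"

definition sandwich ::
  "nat \<Rightarrow> nat \<Rightarrow> (nat \<Rightarrow> nat \<Rightarrow> complex) \<Rightarrow> (nat \<Rightarrow> nat \<Rightarrow> complex) \<Rightarrow> (nat \<Rightarrow> nat \<Rightarrow> complex) \<Rightarrow> nat \<Rightarrow> nat \<Rightarrow> complex"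
  where "sandwich d2 d3 A B X = (\<lambda>j k. if j < d2 \<and> k < d3 then \<Sum>b<d2. \<Sum>c<d3. A j b * B k c * X b c else 0)"

lemma supported_sandwich: "supported d2 d3 (sandwich d2 d3 A B X)"
  unfolding supported_def sandwich_def by auto

lemma sandwich_lincomb:
  "sandwich d2 d3 A B (\<lambda>j k. \<Sum>i<n. c i * X i j k) = (\<lambda>j k. \<Sum>i<n. c i * sandwich d2 d3 A B (X i) j k)"
proof (intro ext)
  fix j k
  show "sandwich d2 d3 A B (\<lambda>j k. \<Sum>i<n. c i * X i j k) j k = (\<Sum>i<n. c i * sandwich d2 d3 A B (X i) j k)"
  proof (cases "j < d2 \<and> k < d3")
    case True
    have "sandwich d2 d3 A B (\<lambda>j k. \<Sum>i<n. c i * X i j k) j k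
       = (\<Sum>b<d2. \<Sum>c'<d3. \<Sum>i<n. c i * (A j b * B k c' * X i b c'))"
      using True by (simp add: sandwich_def sum_distrib_left mult_ac)
    also have "\<dots> = (\<Sum>i<n. \<Sum>b<d2. \<Sum>c'<d3. c i * (A j b * B k c' * X i b c'))"
      by (rule sum_swap_outer2)
    also have "\<dots> = (\<Sum>i<n. c i * sandwich d2 d3 A B (X i) j k)"
      using True by (simp add: sandwich_def sum_distrib_left)
    finally show ?thesis .
  qed (auto simp: sandwich_def)
qed

lemma sandwich_comp:
  "sandwich d2 d3 A B (sandwich d2 d3 A' B' X) = sandwich d2 d3 (mat_mul d2 A A') (mat_mul d3 B B') X"
proof (intro ext)
  fix j k
  show "sandwich d2 d3 A B (sandwich d2 d3 A' B' X) j k = sandwich d2 d3 (mat_mul d2 A A') (mat_mul d3 B B') X j k"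
  proof (cases "j < d2 \<and> k < d3")
    case True
    have "sandwich d2 d3 A B (sandwich d2 d3 A' B' X) j k =
       (\<Sum>b<d2. \<Sum>c<d3. \<Sum>b'<d2. \<Sum>c'<d3. A j b * A' b b' * (B k c * B' c c') * X b' c')"
      using True by (simp add: sandwich_def sum_distrib_left mult_ac)
    also have "\<dots> = (\<Sum>b'<d2. \<Sum>c'<d3. \<Sum>b<d2. \<Sum>c<d3. A j b * A' b b' * (B k c * B' c c') * X b' c')"
      by (rule sum_swap_pairs)
    also have "\<dots> = sandwich d2 d3 (mat_mul d2 A A') (mat_mul d3 B B') X j k"
      using True unfolding sandwich_def mat_mul_def by (simp add: sum_product_2)
    finally show ?thesis .
  qed (auto simp: sandwich_def)
qed

lemma sandwich_id: "supported d2 d3 X \<Longrightarrow> sandwich d2 d3 id_mat id_mat X = X"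
  unfolding sandwich_def supported_def
  by (auto intro!: ext simp: mult.assoc sum_distrib_left[symmetric] sum_id_mat_left)

lemma sandwich_cong:
  assumes "\<And>i j. i < d2 \<Longrightarrow> j < d2 \<Longrightarrow> A i j = A' i j"
    "\<And>i j. i < d3 \<Longrightarrow> j < d3 \<Longrightarrow> B i j = B' i j"
  shows "sandwich d2 d3 A B X = sandwich d2 d3 A' B' X"
  unfolding sandwich_def using assms by (auto intro!: ext sum.cong)

lemma local_op_slice:
  assumes "a < d1"
  shows "local_op d1 d2 d3 L1 L2 L3 \<psi> a = (\<lambda>j k. \<Sum>i<d1. L1 a i * sandwich d2 d3 L2 L3 (\<psi> i) j k)"
  using assms by (auto intro!: ext simp: local_op_def sandwich_def sum_distrib_left mult.assoc)

lemma local_op_slice_id: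
  "a < d1 \<Longrightarrow> local_op d1 d2 d3 id_mat A B \<psi> a = sandwich d2 d3 A B (\<psi> a)"
  by (simp add: local_op_slice sum_id_mat_left)

lemma local_op_outside: "\<not> a < d1 \<Longrightarrow> local_op d1 d2 d3 L1 L2 L3 \<psi> a j k = 0"
  by (simp add: local_op_def)

lemma local_op_comp:
  "local_op d1 d2 d3 A B C (local_op d1 d2 d3 A' B' C' T) =
   local_op d1 d2 d3 (mat_mul d1 A A') (mat_mul d2 B B') (mat_mul d3 C C') T"
proof (intro ext)
  fix a j k
  show "local_op d1 d2 d3 A B C (local_op d1 d2 d3 A' B' C' T) a j k =
    local_op d1 d2 d3 (mat_mul d1 A A') (mat_mul d2 B B') (mat_mul d3 C C') T a j k"
  proof (cases "a < d1")
    case True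
    have "local_op d1 d2 d3 A B C (local_op d1 d2 d3 A' B' C' T) a j k =
      (\<Sum>i<d1. A a i * (\<Sum>i'<d1. A' i i' * sandwich d2 d3 (mat_mul d2 B B') (mat_mul d3 C C') (T i') j k))"
      using True by (simp add: local_op_slice sandwich_lincomb sandwich_comp)
    also have "\<dots> = (\<Sum>i'<d1. mat_mul d1 A A' a i' * sandwich d2 d3 (mat_mul d2 B B') (mat_mul d3 C C') (T i') j k)"
      unfolding mat_mul_def sum_distrib_left sum_distrib_right by (subst sum.swap) (simp add: mult.assoc)
    also have "\<dots> = local_op d1 d2 d3 (mat_mul d1 A A') (mat_mul d2 B B') (mat_mul d3 C C') T a j k"
      using True by (simp add: local_op_slice)
    finally show ?thesis .
  qed (simp add: local_op_outside)
qed

lemma local_op_cong: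
  assumes "\<And>i j. i < d1 \<Longrightarrow> j < d1 \<Longrightarrow> A i j = A' i j"
    "\<And>i j. i < d2 \<Longrightarrow> j < d2 \<Longrightarrow> B i j = B' i j"
    "\<And>i j. i < d3 \<Longrightarrow> j < d3 \<Longrightarrow> C i j = C' i j"
  shows "local_op d1 d2 d3 A B C T = local_op d1 d2 d3 A' B' C' T"
  unfolding local_op_def using assms by (auto intro!: ext sum.cong)

lemma local_op_id:
  assumes "T \<in> tensor3 d1 d2 d3"
  shows "local_op d1 d2 d3 id_mat id_mat id_mat T = T"
  using assms
  by (auto intro!: ext simp: local_op_def tensor3_def mult.assoc sum_distrib_left[symmetric] sum_id_mat_left)

lemma local_op_tensor3: "local_op d1 d2 d3 A B C T \<in> tensor3 d1 d2 d3"
  by (simp add: local_op_def tensor3_def)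

lemma local_op_undo:
  assumes "T \<in> tensor3 d1 d2 d3" "inverse_pair d2 B B'" "inverse_pair d3 C C'"
  shows "local_op d1 d2 d3 id_mat B' C' (local_op d1 d2 d3 id_mat B C T) = T"
proof -
  have "local_op d1 d2 d3 id_mat B' C' (local_op d1 d2 d3 id_mat B C T) =
        local_op d1 d2 d3 (mat_mul d1 id_mat id_mat) (mat_mul d2 B' B) (mat_mul d3 C' C) T"
    by (rule local_op_comp)
  also have "\<dots> = local_op d1 d2 d3 id_mat id_mat id_mat T"
    by (rule local_op_cong) (use assms(2,3) in \<open>auto simp: inverse_pair_def mat_mul_id_left\<close>)
  finally show ?thesis using local_op_id[OF assms(1)] by simp
qed

lemma slocc_le_trans:
  "slocc_le d1 d2 d3 x y \<Longrightarrow> slocc_le d1 d2 d3 y z \<Longrightarrow> slocc_le d1 d2 d3 x z"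
  unfolding slocc_le_def by (metis local_op_comp)

lemma slocc_le_refl: "T \<in> tensor3 d1 d2 d3 \<Longrightarrow> slocc_le d1 d2 d3 T T"
  unfolding slocc_le_def using local_op_id by blast

section \<open>The slice span and the trace pairing\<close>

text \<open>Up to SLOCC equivalence this subspace of
  d2 x d3 matrices carries the whole problem: \<open>\<phi> \<le> \<psi>\<close> as soon as the slices of \<open>\<phi>\<close> lie in
  the slice span of \<open>\<psi>\<close>, and local operators act on slice spans by sandwiching.\<close>
definition slice_span :: "nat \<Rightarrow> (nat \<Rightarrow> nat \<Rightarrow> nat \<Rightarrow> complex) \<Rightarrow> (nat \<Rightarrow> nat \<Rightarrow> complex) set" where
  "slice_span d1 \<phi> = {X. \<exists>c. X = (\<lambda>j k. \<Sum>i<d1. c i * \<phi> i j k)}"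

lemma slice_in_span: "i < d1 \<Longrightarrow> \<phi> i \<in> slice_span d1 \<phi>"
  unfolding slice_span_def by (rule CollectI, rule exI[of _ "id_mat i"]) (simp add: id_mat_mult_left)

lemma span_add:
  assumes "X \<in> slice_span d1 \<psi>" "Y \<in> slice_span d1 \<psi>"
  shows "(\<lambda>j k. X j k + t * Y j k) \<in> slice_span d1 \<psi>"
proof -
  obtain c c' where "X = (\<lambda>j k. \<Sum>i<d1. c i * \<psi> i j k)" "Y = (\<lambda>j k. \<Sum>i<d1. c' i * \<psi> i j k)"
    using assms unfolding slice_span_def by auto
  then have "(\<lambda>j k. X j k + t * Y j k) = (\<lambda>j k. \<Sum>i<d1. (c i + t * c' i) * \<psi> i j k)"
    by (auto simp: sum.distrib sum_distrib_left algebra_simps)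
  then show ?thesis unfolding slice_span_def mem_Collect_eq by (rule exI[of _ "\<lambda>i. c i + t * c' i"])
qed

lemma span_supported: "\<psi> \<in> tensor3 d1 d2 d3 \<Longrightarrow> X \<in> slice_span d1 \<psi> \<Longrightarrow> supported d2 d3 X"
  unfolding slice_span_def supported_def tensor3_def by auto

lemma span_local_op:
  assumes "Y \<in> slice_span d1 (local_op d1 d2 d3 L1 L2 L3 \<psi>)"
  shows "\<exists>X\<in>slice_span d1 \<psi>. Y = sandwich d2 d3 L2 L3 X"
proof -
  obtain c where Y: "Y = (\<lambda>j k. \<Sum>a<d1. c a * local_op d1 d2 d3 L1 L2 L3 \<psi> a j k)"
    using assms unfolding slice_span_def by auto
  define e where "e i = (\<Sum>a<d1. c a * L1 a i)" for i
  have "Y j k = (\<Sum>i<d1. e i * sandwich d2 d3 L2 L3 (\<psi> i) j k)" for j k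
  proof -
    have "Y j k = (\<Sum>a<d1. \<Sum>i<d1. c a * L1 a i * sandwich d2 d3 L2 L3 (\<psi> i) j k)"
      unfolding Y by (auto simp: local_op_slice sum_distrib_left mult.assoc intro!: sum.cong)
    also have "\<dots> = (\<Sum>i<d1. e i * sandwich d2 d3 L2 L3 (\<psi> i) j k)"
      unfolding e_def sum_distrib_right by (rule sum.swap)
    finally show ?thesis .
  qed
  then have "Y = sandwich d2 d3 L2 L3 (\<lambda>j k. \<Sum>i<d1. e i * \<psi> i j k)"
    by (auto simp: sandwich_lincomb)
  moreover have "(\<lambda>j k. \<Sum>i<d1. e i * \<psi> i j k) \<in> slice_span d1 \<psi>" unfolding slice_span_def by blast
  ultimately show ?thesis by blast
qed

lemma sandwich_in_span:
  assumes "X \<in> slice_span d1 \<psi>"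
  shows "sandwich d2 d3 A B X \<in> slice_span d1 (local_op d1 d2 d3 id_mat A B \<psi>)"
proof -
  obtain c where X: "X = (\<lambda>j k. \<Sum>i<d1. c i * \<psi> i j k)" using assms unfolding slice_span_def by auto
  have "sandwich d2 d3 A B X = (\<lambda>j k. \<Sum>i<d1. c i * local_op d1 d2 d3 id_mat A B \<psi> i j k)"
    unfolding X sandwich_lincomb by (auto intro!: ext sum.cong simp: local_op_slice_id)
  then show ?thesis unfolding slice_span_def mem_Collect_eq by (rule exI[of _ c])
qed

lemma slocc_le_if_slices_in_span:
  assumes "\<phi> \<in> tensor3 d1 d2 d3" "\<forall>a<d1. \<phi> a \<in> slice_span d1 \<psi>"
  shows "slocc_le d1 d2 d3 \<phi> \<psi>"
proof -
  have "\<forall>a\<in>{..<d1}. \<exists>c. \<phi> a = (\<lambda>j k. \<Sum>i<d1. c i * \<psi> i j k)"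
    using assms(2) unfolding slice_span_def by auto
  from bchoice[OF this] obtain C where C0: "\<forall>a\<in>{..<d1}. \<phi> a = (\<lambda>j k. \<Sum>i<d1. C a i * \<psi> i j k)"
    by blast
  have "local_op d1 d2 d3 C id_mat id_mat \<psi> a j k = \<phi> a j k" for a j k
  proof (cases "a < d1 \<and> j < d2 \<and> k < d3")
    case True
    then have "local_op d1 d2 d3 C id_mat id_mat \<psi> a j k = (\<Sum>i<d1. C a i * \<psi> i j k)"
      by (simp add: local_op_def mult.assoc sum_distrib_left[symmetric] sum_id_mat_left)
    then show ?thesis using C0 True by simp
  next
    case False then show ?thesis using assms(1) unfolding local_op_def tensor3_def by auto
  qed
  then show ?thesis unfolding slocc_le_def by blast
qed

text \<open>The bilinear pairing \<open>\<langle>M, X\<rangle> = tr(M\<^sup>T X)\<close> on d2 x d3 matrices; the adjoint of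
  \<open>sandwich A B\<close> with respect to it is \<open>M \<mapsto> A\<^sup>T M B\<close>.\<close>
definition pairing :: "nat \<Rightarrow> nat \<Rightarrow> (nat \<Rightarrow> nat \<Rightarrow> complex) \<Rightarrow> (nat \<Rightarrow> nat \<Rightarrow> complex) \<Rightarrow> complex" where
  "pairing d2 d3 M X = (\<Sum>j<d2. \<Sum>k<d3. M j k * X j k)"

definition sandwich_adj ::
  "nat \<Rightarrow> nat \<Rightarrow> (nat \<Rightarrow> nat \<Rightarrow> complex) \<Rightarrow> (nat \<Rightarrow> nat \<Rightarrow> complex) \<Rightarrow> (nat \<Rightarrow> nat \<Rightarrow> complex) \<Rightarrow> nat \<Rightarrow> nat \<Rightarrow> complex"
  where "sandwich_adj d2 d3 A B M = (\<lambda>b c. \<Sum>j<d2. \<Sum>k<d3. A j b * B k c * M j k)"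

lemma pairing_comm: "pairing d2 d3 M X = pairing d2 d3 X M"
  unfolding pairing_def by (simp add: mult.commute)

lemma pairing_cong:
  "(\<And>j k. j < d2 \<Longrightarrow> k < d3 \<Longrightarrow> X j k = Y j k) \<Longrightarrow> pairing d2 d3 M X = pairing d2 d3 M Y"
  unfolding pairing_def by (auto intro!: sum.cong)

lemma pairing_add:
  "pairing d2 d3 M (\<lambda>j k. X j k + t * Y j k) = pairing d2 d3 M X + t * pairing d2 d3 M Y"
  unfolding pairing_def by (simp add: algebra_simps sum.distrib sum_distrib_left)

lemma pairing_lincomb:
  "pairing d2 d3 M (\<lambda>j k. \<Sum>i<n. c i * X i j k) = (\<Sum>i<n. c i * pairing d2 d3 M (X i))"
proof -
  have "pairing d2 d3 M (\<lambda>j k. \<Sum>i<n. c i * X i j k) = (\<Sum>j<d2. \<Sum>k<d3. \<Sum>i<n. c i * (M j k * X i j k))"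
    unfolding pairing_def by (simp add: sum_distrib_left mult_ac)
  also have "\<dots> = (\<Sum>i<n. \<Sum>j<d2. \<Sum>k<d3. c i * (M j k * X i j k))"
    by (rule sum_swap_outer2)
  finally show ?thesis unfolding pairing_def by (simp add: sum_distrib_left)
qed

lemma pairing_sandwich:
  "pairing d2 d3 M (sandwich d2 d3 A B X) = pairing d2 d3 (sandwich_adj d2 d3 A B M) X"
proof -
  have "pairing d2 d3 M (sandwich d2 d3 A B X) = (\<Sum>j<d2. \<Sum>k<d3. \<Sum>b<d2. \<Sum>c<d3. M j k * (A j b * B k c * X b c))"
    unfolding pairing_def sandwich_def by (simp add: sum_distrib_left)
  also have "\<dots> = (\<Sum>b<d2. \<Sum>c<d3. \<Sum>j<d2. \<Sum>k<d3. M j k * (A j b * B k c * X b c))"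
    by (rule sum_swap_pairs)
  also have "\<dots> = pairing d2 d3 (sandwich_adj d2 d3 A B M) X"
    unfolding pairing_def sandwich_adj_def by (intro sum.cong refl) (simp add: sum_distrib_left mult_ac)
  finally show ?thesis .
qed

lemma pairing_span_zero:
  assumes "\<forall>i<d1. pairing d2 d3 M (\<psi> i) = 0" "X \<in> slice_span d1 \<psi>"
  shows "pairing d2 d3 M X = 0"
  using assms unfolding slice_span_def by (auto simp: pairing_lincomb)

lemma pairing_local_op_slice:
  assumes "a < d1"
  shows "pairing d2 d3 R (local_op d1 d2 d3 L1 L2 L3 \<psi> a) =
    (\<Sum>i<d1. L1 a i * pairing d2 d3 (sandwich_adj d2 d3 L2 L3 R) (\<psi> i))"
  using assms by (simp add: local_op_slice pairing_lincomb pairing_sandwich)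

section \<open>Hyperplanes of matrices and the canonical states\<close>

text \<open>\<open>unit_mat a b\<close> is the matrix unit \<open>E_ab\<close>, and \<open>diag_ones r\<close> the diagonal matrix with
  r leading ones, the normal form of a matrix of rank r.\<close>
definition unit_mat :: "nat \<Rightarrow> nat \<Rightarrow> nat \<Rightarrow> nat \<Rightarrow> complex" where
  "unit_mat a b = (\<lambda>j k. if j = a \<and> k = b then 1 else 0)"

definition diag_ones :: "nat \<Rightarrow> nat \<Rightarrow> nat \<Rightarrow> complex" where
  "diag_ones r = (\<lambda>j k. if j = k \<and> j < r then 1 else 0)"

definition hyperplane :: "nat \<Rightarrow> nat \<Rightarrow> (nat \<Rightarrow> nat \<Rightarrow> complex) \<Rightarrow> (nat \<Rightarrow> nat \<Rightarrow> complex) set" where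
  "hyperplane d2 d3 M = {X. supported d2 d3 X \<and> pairing d2 d3 M X = 0}"

lemma unit_mat_sym: "unit_mat j' k' j k = unit_mat j k j' k'"
  unfolding unit_mat_def by auto

lemma pairing_unit_mat:
  assumes "a < d2" "b < d3"
  shows "pairing d2 d3 M (unit_mat a b) = M a b"
proof -
  have "(\<Sum>k<d3. M j k * unit_mat a b j k) = (if j = a then M a b else 0)" for j
    using assms by (cases "j = a") (simp_all add: unit_mat_def if_distrib[of "\<lambda>x. M a _ * x"] cong: if_cong)
  then show ?thesis using assms unfolding pairing_def by simp
qed

lemma supported_unit_mat: "a < d2 \<Longrightarrow> b < d3 \<Longrightarrow> supported d2 d3 (unit_mat a b)"
  unfolding supported_def unit_mat_def by auto

lemma supported_add:
  "supported d2 d3 X \<Longrightarrow> supported d2 d3 Y \<Longrightarrow> supported d2 d3 (\<lambda>j k. X j k + t * Y j k)"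
  unfolding supported_def by auto

text \<open>A subspace W of supported matrices that contains the hyperplane \<open>M\<^sup>\<bottom>\<close> but misses
  some supported matrix Z equals \<open>M\<^sup>\<bottom>\<close>: an element Y of W outside \<open>M\<^sup>\<bottom>\<close> would let us
  shift Z into \<open>M\<^sup>\<bottom>\<close> \<open>\<subseteq>\<close> W along Y.\<close>
lemma subspace_in_hyperplane:
  assumes W_supported: "\<forall>X\<in>W. supported d2 d3 X"
    and W_closed: "\<And>X Y t. X \<in> W \<Longrightarrow> Y \<in> W \<Longrightarrow> (\<lambda>j k. X j k + t * Y j k) \<in> W"
    and hyp_W: "hyperplane d2 d3 M \<subseteq> W"
    and Z: "supported d2 d3 Z" "Z \<notin> W"
  shows "W \<subseteq> hyperplane d2 d3 M"
proof
  fix Y assume Y: "Y \<in> W"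
  show "Y \<in> hyperplane d2 d3 M"
  proof (rule ccontr)
    assume "Y \<notin> hyperplane d2 d3 M"
    then have nz: "pairing d2 d3 M Y \<noteq> 0" using W_supported Y unfolding hyperplane_def by auto
    define t where "t = - pairing d2 d3 M Z / pairing d2 d3 M Y"
    define Z' where "Z' = (\<lambda>j k. Z j k + t * Y j k)"
    have "supported d2 d3 Z'" unfolding Z'_def using Z(1) W_supported Y by (simp add: supported_add)
    moreover have "pairing d2 d3 M Z' = 0" unfolding Z'_def pairing_add using nz by (simp add: t_def)
    ultimately have "Z' \<in> hyperplane d2 d3 M" unfolding hyperplane_def by simp
    then have "Z' \<in> W" using hyp_W by auto
    from W_closed[OF this Y, of "-t"] have "(\<lambda>j k. Z' j k + (-t) * Y j k) \<in> W" .
    moreover have "(\<lambda>j k. Z' j k + (-t) * Y j k) = Z" unfolding Z'_def by auto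
    ultimately show False using Z(2) by simp
  qed
qed

text \<open>The annihilator of the hyperplane \<open>diag_ones r\<^sup>\<bottom>\<close> is spanned by \<open>diag_ones r\<close>:
  test against the matrices \<open>E_jk - D_jk E_00\<close>, which lie in the hyperplane.\<close>
lemma hyperplane_annihilator:
  assumes "1 \<le> r" "0 < d2" "0 < d3"
    and R: "\<forall>X\<in>hyperplane d2 d3 (diag_ones r). pairing d2 d3 R X = 0"
  shows "\<forall>j<d2. \<forall>k<d3. R j k = R 0 0 * diag_ones r j k"
proof (intro allI impI)
  fix j k assume jk: "j < d2" "k < d3"
  define c where "c = - diag_ones r j k"
  define X where "X = (\<lambda>j' k'. unit_mat j k j' k' + c * unit_mat 0 0 j' k')"
  have D00: "diag_ones r 0 0 = 1" using assms by (simp add: diag_ones_def)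
  have "supported d2 d3 X"
    unfolding X_def using jk assms by (intro supported_add supported_unit_mat) auto
  moreover have "pairing d2 d3 (diag_ones r) X = 0"
    unfolding X_def pairing_add using jk assms D00 by (simp add: pairing_unit_mat c_def)
  ultimately have "X \<in> hyperplane d2 d3 (diag_ones r)" unfolding hyperplane_def by simp
  then have "pairing d2 d3 R X = 0" using R by auto
  then show "R j k = R 0 0 * diag_ones r j k"
    unfolding X_def pairing_add using jk assms by (simp add: pairing_unit_mat c_def)
qed

lemma sum_flatten:
  fixes f :: "nat \<Rightarrow> nat \<Rightarrow> complex"
  assumes "0 < d3"
  shows "(\<Sum>n<d2*d3. f (n div d3) (n mod d3)) = (\<Sum>j<d2. \<Sum>k<d3. f j k)"
proof -
  have "(\<Sum>n<d2*d3. f (n div d3) (n mod d3)) = (\<Sum>j<d2. \<Sum>n\<in>{j*d3..<j*d3+d3}. f (n div d3) (n mod d3))"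
    by (rule sum.nat_group[symmetric])
  also have "\<dots> = (\<Sum>j<d2. \<Sum>k<d3. f j k)"
  proof (rule sum.cong[OF refl])
    fix j
    have "(\<Sum>n\<in>{0 + j*d3..<d3 + j*d3}. f (n div d3) (n mod d3)) =
          (\<Sum>k\<in>{0..<d3}. f ((k + j*d3) div d3) ((k + j*d3) mod d3))"
      by (rule sum.shift_bounds_nat_ivl)
    also have "\<dots> = (\<Sum>k<d3. f j k)"
      using assms by (intro sum.cong) auto
    finally show "(\<Sum>n\<in>{j*d3..<j*d3+d3}. f (n div d3) (n mod d3)) = (\<Sum>k<d3. f j k)"
      by (simp add: add.commute)
  qed
  finally show ?thesis .
qed

lemma annihilating_matrix_exists:
  assumes "d1 < d2 * d3"
  shows "\<exists>M. (\<exists>j<d2. \<exists>k<d3. M j k \<noteq> 0) \<and> (\<forall>i<d1. pairing d2 d3 M (\<psi> i) = 0)"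
proof -
  have d3: "0 < d3" using assms by (cases d3) auto
  define B where "B i n = \<psi> i (n div d3) (n mod d3)" for i n
  obtain v where v_nz: "\<exists>n<d2*d3. v n \<noteq> 0" and v_sol: "\<forall>i<d1. (\<Sum>n<d2*d3. B i n * v n) = 0"
    using homogeneous_system_nontrivial[OF assms, of B] by auto
  define M where "M j k = v (j * d3 + k)" for j k
  have "\<exists>j<d2. \<exists>k<d3. M j k \<noteq> 0"
  proof -
    obtain n where n: "n < d2*d3" "v n \<noteq> 0" using v_nz by auto
    have "n div d3 < d2" "n mod d3 < d3" using n(1) d3 by (simp_all add: less_mult_imp_div_less)
    moreover have "M (n div d3) (n mod d3) = v n" by (simp add: M_def mult.commute[of _ d3])
    ultimately show ?thesis using n by metis
  qed
  moreover have "pairing d2 d3 M (\<psi> i) = 0" if i: "i < d1" for i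
  proof -
    have "pairing d2 d3 M (\<psi> i) = (\<Sum>n<d2*d3. v ((n div d3) * d3 + n mod d3) * \<psi> i (n div d3) (n mod d3))"
      unfolding pairing_def M_def by (rule sum_flatten[OF d3, symmetric])
    also have "\<dots> = (\<Sum>n<d2*d3. B i n * v n)"
      unfolding B_def by (simp add: mult.commute)
    finally show ?thesis using v_sol i by simp
  qed
  ultimately show ?thesis by blast
qed

lemma slice_span_proper:
  assumes "d1 < d2 * d3"
  shows "\<exists>Z. supported d2 d3 Z \<and> Z \<notin> slice_span d1 \<psi>"
proof -
  obtain M j k where M: "j < d2" "k < d3" "M j k \<noteq> 0" "\<forall>i<d1. pairing d2 d3 M (\<psi> i) = 0"
    using annihilating_matrix_exists[OF assms] by blast
  have "unit_mat j k \<notin> slice_span d1 \<psi>"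
  proof
    assume "unit_mat j k \<in> slice_span d1 \<psi>"
    then have "pairing d2 d3 M (unit_mat j k) = 0" using pairing_span_zero M(4) by blast
    then show False using M by (simp add: pairing_unit_mat)
  qed
  then show ?thesis using supported_unit_mat M by blast
qed

text \<open>The canonical state of rank r for \<open>d1 = d2 d3 - 1\<close>: its slices are the matrices
  \<open>E_jk - D_jk E_00\<close> (\<open>D = diag_ones r\<close>) for the flattened indices \<open>(j, k) \<noteq> (0, 0)\<close>,
  a basis of the hyperplane \<open>D\<^sup>\<bottom>\<close>.\<close>
definition canonical_state :: "nat \<Rightarrow> nat \<Rightarrow> nat \<Rightarrow> nat \<Rightarrow> nat \<Rightarrow> nat \<Rightarrow> nat \<Rightarrow> complex" where
  "canonical_state d1 d2 d3 r = (\<lambda>a j k. if a < d1 \<and> j < d2 \<and> k < d3 then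
     unit_mat (Suc a div d3) (Suc a mod d3) j k - diag_ones r (Suc a div d3) (Suc a mod d3) * unit_mat 0 0 j k
     else 0)"

lemma canonical_state_tensor3: "canonical_state d1 d2 d3 r \<in> tensor3 d1 d2 d3"
  unfolding canonical_state_def tensor3_def by auto

lemma canonical_span_in_hyperplane:
  assumes "Suc d1 = d2 * d3" "1 \<le> r"
  shows "slice_span d1 (canonical_state d1 d2 d3 r) \<subseteq> hyperplane d2 d3 (diag_ones r)"
proof
  fix X assume X: "X \<in> slice_span d1 (canonical_state d1 d2 d3 r)"
  have "pairing d2 d3 (diag_ones r) (canonical_state d1 d2 d3 r a) = 0" if a: "a < d1" for a
  proof -
    have d: "0 < d2" "0 < d3" using assms(1) by (metis nat_0_less_mult_iff zero_less_Suc)+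
    have box: "Suc a div d3 < d2" "Suc a mod d3 < d3"
      using a assms d by (auto simp: less_mult_imp_div_less)
    define c where "c = - diag_ones r (Suc a div d3) (Suc a mod d3)"
    have "pairing d2 d3 (diag_ones r) (canonical_state d1 d2 d3 r a) =
          pairing d2 d3 (diag_ones r) (\<lambda>j k. unit_mat (Suc a div d3) (Suc a mod d3) j k + c * unit_mat 0 0 j k)"
      by (rule pairing_cong) (simp add: canonical_state_def a c_def)
    also have "\<dots> = 0"
      unfolding pairing_add using box d assms(2) by (simp add: pairing_unit_mat c_def diag_ones_def)
    finally show ?thesis .
  qed
  then have "pairing d2 d3 (diag_ones r) X = 0" using pairing_span_zero X by blast
  moreover have "supported d2 d3 X" using span_supported[OF canonical_state_tensor3 X] .
  ultimately show "X \<in> hyperplane d2 d3 (diag_ones r)" unfolding hyperplane_def by simp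
qed

text \<open>Conversely every X in the hyperplane expands as \<open>\<Sum> X_jk (E_jk - D_jk E_00)\<close>, since
  \<open>\<Sum> X_jk D_jk = 0\<close>; the term for \<open>(0, 0)\<close> vanishes.\<close>
lemma hyperplane_in_canonical_span:
  assumes "Suc d1 = d2 * d3" "1 \<le> r"
  shows "hyperplane d2 d3 (diag_ones r) \<subseteq> slice_span d1 (canonical_state d1 d2 d3 r)"
proof
  fix X assume X: "X \<in> hyperplane d2 d3 (diag_ones r)"
  then have X_supp: "supported d2 d3 X" and X_orth: "pairing d2 d3 (diag_ones r) X = 0"
    unfolding hyperplane_def by auto
  have d3: "0 < d3" using assms(1) by (metis nat_0_less_mult_iff zero_less_Suc)
  define c where "c a = X (Suc a div d3) (Suc a mod d3)" for a
  have "X j k = (\<Sum>a<d1. c a * canonical_state d1 d2 d3 r a j k)" for j k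
  proof (cases "j < d2 \<and> k < d3")
    case False
    then show ?thesis using X_supp unfolding supported_def canonical_state_def by auto
  next
    case True
    define F where "F n = X (n div d3) (n mod d3) * unit_mat (n div d3) (n mod d3) j k -
        X (n div d3) (n mod d3) * diag_ones r (n div d3) (n mod d3) * unit_mat 0 0 j k" for n
    have "(\<Sum>n<d2*d3. F n) =
        (\<Sum>j'<d2. \<Sum>k'<d3. X j' k' * unit_mat j' k' j k - X j' k' * diag_ones r j' k' * unit_mat 0 0 j k)"
      unfolding F_def by (rule sum_flatten[OF d3])
    also have "\<dots> = pairing d2 d3 X (unit_mat j k) - pairing d2 d3 X (diag_ones r) * unit_mat 0 0 j k"
      unfolding pairing_def by (simp add: sum_subtractf sum_distrib_right unit_mat_sym[of _ _ j k])
    also have "\<dots> = X j k"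
      using True X_orth by (simp add: pairing_unit_mat pairing_comm[of d2 d3 X "diag_ones r"])
    finally have expansion: "(\<Sum>n<d2*d3. F n) = X j k" .
    have "(\<Sum>n<d2*d3. F n) = F 0 + (\<Sum>a<d1. F (Suc a))"
      unfolding assms(1)[symmetric] by (rule sum.lessThan_Suc_shift)
    moreover have "F 0 = 0" unfolding F_def using assms(2) by (simp add: diag_ones_def)
    moreover have "(\<Sum>a<d1. F (Suc a)) = (\<Sum>a<d1. c a * canonical_state d1 d2 d3 r a j k)"
      unfolding F_def c_def canonical_state_def using True by (intro sum.cong refl) (simp add: algebra_simps)
    ultimately show ?thesis using expansion by simp
  qed
  then have "X = (\<lambda>j k. \<Sum>a<d1. c a * canonical_state d1 d2 d3 r a j k)" by (intro ext)
  then show "X \<in> slice_span d1 (canonical_state d1 d2 d3 r)"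
    unfolding slice_span_def mem_Collect_eq by (rule exI[of _ c])
qed

lemma span_canonical_state:
  assumes "Suc d1 = d2 * d3" "1 \<le> r"
  shows "slice_span d1 (canonical_state d1 d2 d3 r) = hyperplane d2 d3 (diag_ones r)"
  using canonical_span_in_hyperplane[OF assms] hyperplane_in_canonical_span[OF assms] by (rule antisym)

section \<open>SLOCC maximality and inequivalence of the canonical states\<close>

lemma sandwich_adj_outer:
  "sandwich_adj d2 d3 A B (\<lambda>j k. u j * w k) b c = (\<Sum>j<d2. A j b * u j) * (\<Sum>k<d3. B k c * w k)"
  unfolding sandwich_adj_def by (simp add: sum_product mult_ac)

lemma pairing_zero_left: "(\<And>j k. j < d2 \<Longrightarrow> k < d3 \<Longrightarrow> M j k = 0) \<Longrightarrow> pairing d2 d3 M X = 0"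
  unfolding pairing_def by simp

text \<open>Suppose the slice span of \<open>\<phi> = (L1 \<otimes> L2 \<otimes> L3) \<psi>\<close> contains the hyperplane
  \<open>diag_ones r\<^sup>\<bottom>\<close>.  A matrix R with \<open>L2\<^sup>T R L3 = 0\<close> annihilates every slice of \<open>\<phi>\<close>, hence
  that hyperplane, so it is a multiple of \<open>diag_ones r\<close>.\<close>
lemma annihilator_of_local_image:
  assumes "1 \<le> r" "0 < d2" "0 < d3"
    and span: "hyperplane d2 d3 (diag_ones r) \<subseteq> slice_span d1 \<phi>"
    and phi: "\<phi> = local_op d1 d2 d3 L1 L2 L3 \<psi>"
    and R: "\<And>b c. b < d2 \<Longrightarrow> c < d3 \<Longrightarrow> sandwich_adj d2 d3 L2 L3 R b c = 0"
  shows "\<forall>j<d2. \<forall>k<d3. R j k = R 0 0 * diag_ones r j k"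
proof -
  have "pairing d2 d3 R (\<phi> a) = 0" if "a < d1" for a
    unfolding phi using that by (simp add: pairing_local_op_slice pairing_zero_left R)
  then have "\<forall>X\<in>hyperplane d2 d3 (diag_ones r). pairing d2 d3 R X = 0"
    using pairing_span_zero span by blast
  then show ?thesis using hyperplane_annihilator assms(1-3) by blast
qed

text \<open>Under the same hypothesis \<open>L2\<close> and \<open>L3\<close> are invertible: a left-kernel vector v of
  \<open>L2\<close> (of \<open>L3\<close>) would make \<open>v \<otimes> e_1\<close> (\<open>e_1 \<otimes> v\<close>) a multiple of \<open>diag_ones r\<close>, which
  it is not.  This needs \<open>d2, d3 \<ge> 2\<close>.\<close>
lemma second_factor_invertible:
  assumes d: "2 \<le> d2" "2 \<le> d3" and r: "1 \<le> r"
    and span: "hyperplane d2 d3 (diag_ones r) \<subseteq> slice_span d1 \<phi>"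
    and phi: "\<phi> = local_op d1 d2 d3 L1 L2 L3 \<psi>"
  shows "\<exists>L2'. inverse_pair d2 L2 L2'"
proof (rule inverse_if_left_injective, rule ccontr)
  fix v assume v: "\<forall>i<d2. (\<Sum>k<d2. L2 k i * v k) = 0" and "\<not> (\<forall>k<d2. v k = 0)"
  then obtain b0 where b0: "b0 < d2" "v b0 \<noteq> 0" by auto
  define R where "R = (\<lambda>j k. v j * id_mat k 1)"
  have "sandwich_adj d2 d3 L2 L3 R b c = 0" if "b < d2" for b c
    unfolding R_def sandwich_adj_outer using v that by simp
  moreover have "0 < d2" "0 < d3" using d by auto
  ultimately have "\<forall>j<d2. \<forall>k<d3. R j k = R 0 0 * diag_ones r j k"
    using annihilator_of_local_image[OF r _ _ span phi] by blast
  moreover have "1 < d3" using d by simp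
  ultimately have "R b0 1 = R 0 0 * diag_ones r b0 1" using b0 by blast
  then show False using b0 by (simp add: R_def id_mat_def)
qed

lemma third_factor_invertible:
  assumes d: "2 \<le> d2" "2 \<le> d3" and r: "1 \<le> r"
    and span: "hyperplane d2 d3 (diag_ones r) \<subseteq> slice_span d1 \<phi>"
    and phi: "\<phi> = local_op d1 d2 d3 L1 L2 L3 \<psi>"
  shows "\<exists>L3'. inverse_pair d3 L3 L3'"
proof (rule inverse_if_left_injective, rule ccontr)
  fix v assume v: "\<forall>i<d3. (\<Sum>k<d3. L3 k i * v k) = 0" and "\<not> (\<forall>k<d3. v k = 0)"
  then obtain c0 where c0: "c0 < d3" "v c0 \<noteq> 0" by auto
  define R where "R = (\<lambda>j k. id_mat j 1 * v k)"
  have "sandwich_adj d2 d3 L2 L3 R b c = 0" if "c < d3" for b c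
    unfolding R_def sandwich_adj_outer using v that by simp
  moreover have "0 < d2" "0 < d3" using d by auto
  ultimately have "\<forall>j<d2. \<forall>k<d3. R j k = R 0 0 * diag_ones r j k"
    using annihilator_of_local_image[OF r _ _ span phi] by blast
  moreover have "1 < d2" using d by simp
  ultimately have "R 1 c0 = R 0 0 * diag_ones r 1 c0" using c0 by blast
  then show False using c0 by (simp add: R_def id_mat_def)
qed

text \<open>Under the same hypothesis, and when the slice span of \<open>\<psi>\<close> is proper, the operators
  on parties 2 and 3 alone already carry the slice span of \<open>\<psi>\<close> onto the hyperplane:
  the image is a proper subspace containing the hyperplane.\<close>
lemma normalised_slice_span:
  assumes N: "d1 < d2 * d3"
    and span: "hyperplane d2 d3 (diag_ones r) \<subseteq> slice_span d1 \<phi>"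
    and phi: "\<phi> = local_op d1 d2 d3 L1 L2 L3 \<psi>"
  shows "slice_span d1 (local_op d1 d2 d3 id_mat L2 L3 \<psi>) = hyperplane d2 d3 (diag_ones r)"
proof -
  define \<psi>2 where "\<psi>2 = local_op d1 d2 d3 id_mat L2 L3 \<psi>"
  have \<psi>2: "\<psi>2 \<in> tensor3 d1 d2 d3" unfolding \<psi>2_def by (rule local_op_tensor3)
  have "\<phi> = local_op d1 d2 d3 (mat_mul d1 L1 id_mat) (mat_mul d2 id_mat L2) (mat_mul d3 id_mat L3) \<psi>"
    unfolding phi by (rule local_op_cong) (simp_all add: mat_mul_id_left mat_mul_id_right)
  then have phi2: "\<phi> = local_op d1 d2 d3 L1 id_mat id_mat \<psi>2"
    unfolding \<psi>2_def by (simp add: local_op_comp)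
  have sub: "slice_span d1 \<phi> \<subseteq> slice_span d1 \<psi>2"
  proof
    fix Y assume "Y \<in> slice_span d1 \<phi>"
    then obtain X where X: "X \<in> slice_span d1 \<psi>2" "Y = sandwich d2 d3 id_mat id_mat X"
      using span_local_op[of Y d1 d2 d3 L1 id_mat id_mat \<psi>2] phi2 by auto
    then show "Y \<in> slice_span d1 \<psi>2" using span_supported[OF \<psi>2 X(1)] by (simp add: sandwich_id)
  qed
  obtain Z where Z: "supported d2 d3 Z" "Z \<notin> slice_span d1 \<psi>2" using slice_span_proper[OF N] by blast
  have "slice_span d1 \<psi>2 \<subseteq> hyperplane d2 d3 (diag_ones r)"
    by (rule subspace_in_hyperplane[OF _ _ _ Z]) (use span_supported[OF \<psi>2] span_add span sub in auto)
  then show ?thesis using span sub unfolding \<psi>2_def by auto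
qed

text \<open>If \<open>\<Phi>_r \<le> \<psi>\<close>, the slice span of \<open>\<psi>\<close>,
  transformed by the (invertible) operators on parties 2 and 3, is the slice span of \<open>\<Phi>_r\<close>;
  so that transform of \<open>\<psi>\<close> is below \<open>\<Phi>_r\<close>, and undoing the operators gives \<open>\<psi> \<le> \<Phi>_r\<close>.\<close>
lemma canonical_state_maximal:
  assumes d1: "Suc d1 = d2 * d3" and d: "2 \<le> d2" "2 \<le> d3" and r: "1 \<le> r"
  shows "slocc_maximal d1 d2 d3 (canonical_state d1 d2 d3 r)"
  unfolding slocc_maximal_def
proof (intro conjI ballI impI canonical_state_tensor3)
  fix \<psi> assume \<psi>: "\<psi> \<in> tensor3 d1 d2 d3" and "slocc_le d1 d2 d3 (canonical_state d1 d2 d3 r) \<psi>"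
  then obtain L1 L2 L3 where phi: "canonical_state d1 d2 d3 r = local_op d1 d2 d3 L1 L2 L3 \<psi>"
    unfolding slocc_le_def by metis
  have span: "hyperplane d2 d3 (diag_ones r) \<subseteq> slice_span d1 (canonical_state d1 d2 d3 r)"
    using span_canonical_state[OF d1 r] by simp
  obtain L2' where L2: "inverse_pair d2 L2 L2'" using second_factor_invertible[OF d r span phi] by blast
  obtain L3' where L3: "inverse_pair d3 L3 L3'" using third_factor_invertible[OF d r span phi] by blast
  define \<psi>2 where "\<psi>2 = local_op d1 d2 d3 id_mat L2 L3 \<psi>"
  have "slice_span d1 \<psi>2 = slice_span d1 (canonical_state d1 d2 d3 r)"
    using normalised_slice_span[of d1 d2 d3, OF _ span phi] span_canonical_state[OF d1 r] d1
    unfolding \<psi>2_def by simp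
  then have "slocc_le d1 d2 d3 \<psi>2 (canonical_state d1 d2 d3 r)"
    using slice_in_span[of _ d1 \<psi>2] unfolding \<psi>2_def
    by (intro slocc_le_if_slices_in_span local_op_tensor3) auto
  moreover have "slocc_le d1 d2 d3 \<psi> \<psi>2"
    unfolding slocc_le_def \<psi>2_def using local_op_undo[OF \<psi> L2 L3] by metis
  ultimately show "slocc_le d1 d2 d3 \<psi> (canonical_state d1 d2 d3 r)" using slocc_le_trans by blast
qed

text \<open>Rank bound: the identity block \<open>diag_ones s\<close> of size s is not a product of an
  s x r and an r x s matrix with \<open>r < s\<close>, since Q would have a nontrivial kernel.\<close>
lemma diag_ones_rank_bound:
  fixes P Q :: "nat \<Rightarrow> nat \<Rightarrow> complex"
  assumes h: "\<forall>j<s. \<forall>k<s. diag_ones s j k = (\<Sum>t<r. P j t * Q t k)" and rs: "r < s"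
  shows False
proof -
  obtain v where v_nz: "\<exists>k<s. v k \<noteq> 0" and v_ker: "\<forall>t<r. (\<Sum>k<s. Q t k * v k) = 0"
    using homogeneous_system_nontrivial[OF rs, of Q] by auto
  have "v j = 0" if j: "j < s" for j
  proof -
    have "v j = (\<Sum>k<s. diag_ones s j k * v k)"
      using j by (simp add: diag_ones_def if_distrib[of "\<lambda>x. x * v _"] cong: if_cong)
    also have "\<dots> = (\<Sum>k<s. \<Sum>t<r. P j t * (Q t k * v k))"
      using h j by (intro sum.cong refl) (simp add: sum_distrib_right mult.assoc)
    also have "\<dots> = (\<Sum>t<r. P j t * (\<Sum>k<s. Q t k * v k))"
      by (subst sum.swap) (simp add: sum_distrib_left)
    also have "\<dots> = 0" using v_ker by simp
    finally show ?thesis .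
  qed
  then show False using v_nz by auto
qed

lemma sandwich_adj_diag_ones:
  assumes "r \<le> d2" "r \<le> d3"
  shows "sandwich_adj d2 d3 A B (diag_ones r) j k = (\<Sum>b<r. A b j * B b k)"
proof -
  have "sandwich_adj d2 d3 A B (diag_ones r) j k = (\<Sum>b<d2. if b < r then A b j * B b k else 0)"
    unfolding sandwich_adj_def
  proof (rule sum.cong[OF refl])
    fix b assume "b \<in> {..<d2}"
    show "(\<Sum>c<d3. A b j * B c k * diag_ones r b c) = (if b < r then A b j * B b k else 0)"
      using assms by (cases "b < r") (simp_all add: diag_ones_def if_distrib[of "\<lambda>x. _ * x"] cong: if_cong)
  qed
  also have "\<dots> = (\<Sum>b\<in>{..<d2} \<inter> {b. b < r}. A b j * B b k)"
    by (simp add: sum.If_cases)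
  also have "{..<d2} \<inter> {b. b < r} = {..<r}"
    using assms by auto
  finally show ?thesis .
qed

lemma pairing_sandwich_inverse:
  assumes "inverse_pair d2 A A'" "inverse_pair d3 B B'" "supported d2 d3 X"
  shows "pairing d2 d3 (sandwich_adj d2 d3 A' B' M) (sandwich d2 d3 A B X) = pairing d2 d3 M X"
proof -
  have "sandwich d2 d3 A' B' (sandwich d2 d3 A B X) = sandwich d2 d3 id_mat id_mat X"
    unfolding sandwich_comp
    by (rule sandwich_cong) (use assms(1,2) in \<open>auto simp: inverse_pair_def\<close>)
  then show ?thesis using assms(3) by (simp add: pairing_sandwich[symmetric] sandwich_id)
qed

text \<open>As in the maximality proof, invertible \<open>L2, L3\<close> carry the
  hyperplane \<open>diag_ones s\<^sup>\<bottom>\<close> into \<open>diag_ones r\<^sup>\<bottom>\<close>; dually \<open>L2'\<^sup>T diag_ones r L3'\<close> is a nonzero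
  multiple of \<open>diag_ones s\<close>, and comparing ranks gives \<open>s \<le> r\<close>.\<close>
lemma canonical_state_le_rank:
  assumes d1: "Suc d1 = d2 * d3" and d: "2 \<le> d2" "2 \<le> d3" and r: "1 \<le> r" and s: "1 \<le> s"
    and rm: "r \<le> min d2 d3" and sm: "s \<le> min d2 d3"
    and le: "slocc_le d1 d2 d3 (canonical_state d1 d2 d3 s) (canonical_state d1 d2 d3 r)"
  shows "s \<le> r"
proof (rule ccontr)
  assume "\<not> s \<le> r" then have rs: "r < s" by simp
  from le obtain L1 L2 L3
    where phi: "canonical_state d1 d2 d3 s = local_op d1 d2 d3 L1 L2 L3 (canonical_state d1 d2 d3 r)"
    unfolding slocc_le_def by metis
  have span: "hyperplane d2 d3 (diag_ones s) \<subseteq> slice_span d1 (canonical_state d1 d2 d3 s)"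
    using span_canonical_state[OF d1 s] by simp
  obtain L2' where L2: "inverse_pair d2 L2 L2'" using second_factor_invertible[OF d s span phi] by blast
  obtain L3' where L3: "inverse_pair d3 L3 L3'" using third_factor_invertible[OF d s span phi] by blast
  define \<psi>2 where "\<psi>2 = local_op d1 d2 d3 id_mat L2 L3 (canonical_state d1 d2 d3 r)"
  have span2: "slice_span d1 \<psi>2 = hyperplane d2 d3 (diag_ones s)"
    using normalised_slice_span[of d1 d2 d3, OF _ span phi] d1 unfolding \<psi>2_def by simp
  have undo: "local_op d1 d2 d3 id_mat L2' L3' \<psi>2 = canonical_state d1 d2 d3 r"
    unfolding \<psi>2_def by (rule local_op_undo[OF canonical_state_tensor3 L2 L3])
  define R where "R = sandwich_adj d2 d3 L2' L3' (diag_ones r)"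
  have "pairing d2 d3 R Y = 0" if "Y \<in> hyperplane d2 d3 (diag_ones s)" for Y
  proof -
    have "sandwich d2 d3 L2' L3' Y \<in> slice_span d1 (canonical_state d1 d2 d3 r)"
      using sandwich_in_span[of Y d1 \<psi>2 d2 d3 L2' L3'] that span2 undo by simp
    then have "sandwich d2 d3 L2' L3' Y \<in> hyperplane d2 d3 (diag_ones r)"
      using span_canonical_state[OF d1 r] by simp
    then show ?thesis unfolding R_def pairing_sandwich[symmetric] hyperplane_def by simp
  qed
  moreover have "0 < d2" "0 < d3" using d by auto
  ultimately have R_mult: "\<forall>j<d2. \<forall>k<d3. R j k = R 0 0 * diag_ones s j k"
    using hyperplane_annihilator[OF s] by blast
  have R00: "R 0 0 \<noteq> 0"
  proof
    assume "R 0 0 = 0"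
    then have "R j k = 0" if "j < d2" "k < d3" for j k using R_mult that by (metis mult_zero_left)
    then have "pairing d2 d3 R Y = 0" for Y by (rule pairing_zero_left)
    moreover have "pairing d2 d3 R (sandwich d2 d3 L2 L3 (unit_mat 0 0)) = pairing d2 d3 (diag_ones r) (unit_mat 0 0)"
      unfolding R_def using d by (intro pairing_sandwich_inverse L2 L3 supported_unit_mat) auto
    ultimately show False using d r by (simp add: pairing_unit_mat diag_ones_def)
  qed
  have "\<forall>j<s. \<forall>k<s. diag_ones s j k = (\<Sum>t<r. (L2' t j / R 0 0) * L3' t k)"
  proof (intro allI impI)
    fix j k assume "j < s" "k < s"
    then have "j < d2" "k < d3" using sm by auto
    then have "R j k = R 0 0 * diag_ones s j k" using R_mult by blast
    moreover have "R j k = (\<Sum>t<r. L2' t j * L3' t k)"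
      unfolding R_def using rm by (intro sandwich_adj_diag_ones) auto
    ultimately have "diag_ones s j k = (\<Sum>t<r. L2' t j * L3' t k) / R 0 0"
      using R00 by (simp add: eq_divide_eq mult.commute)
    then show "diag_ones s j k = (\<Sum>t<r. (L2' t j / R 0 0) * L3' t k)"
      by (simp add: sum_divide_distrib)
  qed
  then show False
    using diag_ones_rank_bound[where P="\<lambda>j t. L2' t j / R 0 0" and Q="\<lambda>t k. L3' t k"] rs by blast
qed

section \<open>Rank normal form of a nonzero matrix\<close>

text \<open>Every nonzero d2 x d3 matrix M can be written as \<open>P diag_ones r Q\<close> with P, Q
  invertible and \<open>1 \<le> r \<le> min d2 d3\<close>, by Gaussian elimination with full pivoting.
  Matrices are compared on the index box only.\<close>

definition box_eq :: "nat \<Rightarrow> nat \<Rightarrow> (nat \<Rightarrow> nat \<Rightarrow> complex) \<Rightarrow> (nat \<Rightarrow> nat \<Rightarrow> complex) \<Rightarrow> bool" where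
  "box_eq p q X Y \<longleftrightarrow> (\<forall>j<p. \<forall>k<q. X j k = Y j k)"

lemma box_eq_trans: "box_eq p q X Y \<Longrightarrow> box_eq p q Y Z \<Longrightarrow> box_eq p q X Z"
  unfolding box_eq_def by auto

lemma box_eq_mul:
  "box_eq d2 d3 X Y \<Longrightarrow> box_eq d2 d3 (mat_mul d3 (mat_mul d2 P X) Q) (mat_mul d3 (mat_mul d2 P Y) Q)"
  unfolding box_eq_def mat_mul_def by auto

definition swap_idx :: "nat \<Rightarrow> nat \<Rightarrow> nat \<Rightarrow> nat" where
  "swap_idx a b x = (if x = a then b else if x = b then a else x)"

definition swap_mat :: "nat \<Rightarrow> nat \<Rightarrow> nat \<Rightarrow> nat \<Rightarrow> complex" where
  "swap_mat a b = (\<lambda>j j'. id_mat (swap_idx a b j) j')"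

lemma swap_idx_swap_idx [simp]: "swap_idx a b (swap_idx a b x) = x"
  unfolding swap_idx_def by auto

lemma swap_idx_less: "a < d \<Longrightarrow> b < d \<Longrightarrow> x < d \<Longrightarrow> swap_idx a b x < d"
  unfolding swap_idx_def by auto

lemma mat_mul_swap_left:
  "a < d \<Longrightarrow> b < d \<Longrightarrow> j < d \<Longrightarrow> mat_mul d (swap_mat a b) X j k = X (swap_idx a b j) k"
  unfolding mat_mul_def swap_mat_def by (simp add: sum_id_mat_left swap_idx_less)

lemma mat_mul_swap_right:
  assumes "a < d" "b < d" "k < d"
  shows "mat_mul d X (swap_mat a b) j k = X j (swap_idx a b k)"
proof -
  have "id_mat (swap_idx a b k') k = id_mat k' (swap_idx a b k)" for k'
    unfolding id_mat_def swap_idx_def by auto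
  then show ?thesis
    unfolding mat_mul_def swap_mat_def using assms by (simp add: sum_id_mat_right swap_idx_less)
qed

lemma inverse_pair_swap: "a < d \<Longrightarrow> b < d \<Longrightarrow> inverse_pair d (swap_mat a b) (swap_mat a b)"
  unfolding inverse_pair_def by (simp add: mat_mul_swap_left swap_idx_less) (simp add: swap_mat_def swap_idx_def)

definition col_elim :: "nat \<Rightarrow> (nat \<Rightarrow> complex) \<Rightarrow> nat \<Rightarrow> nat \<Rightarrow> complex" where
  "col_elim s c = (\<lambda>j j'. if j' = s then c j else id_mat j j')"

definition row_elim :: "nat \<Rightarrow> (nat \<Rightarrow> complex) \<Rightarrow> nat \<Rightarrow> nat \<Rightarrow> complex" where
  "row_elim s w = (\<lambda>k' k. if k' = s then w k else id_mat k' k)"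

definition elim_inv :: "nat \<Rightarrow> (nat \<Rightarrow> complex) \<Rightarrow> nat \<Rightarrow> complex" where
  "elim_inv s c = (\<lambda>j. if j = s then 1 / c s else - c j / c s)"

lemma sum_split_at: "s < (d::nat) \<Longrightarrow> (\<Sum>j<d. f j) = f s + (\<Sum>j\<in>{..<d}-{s}. f j)"
  using sum.remove[of "{..<d}" s f] by simp

lemma mat_mul_col_elim:
  assumes "s < d"
  shows "mat_mul d (col_elim s c) X j k = (if j = s then 0 else if j < d then X j k else 0) + c j * X s k"
proof -
  have "mat_mul d (col_elim s c) X j k = c j * X s k + (\<Sum>j'\<in>{..<d}-{s}. id_mat j j' * X j' k)"
    unfolding mat_mul_def col_elim_def using assms
    by (subst sum_split_at[OF assms]) (auto intro!: sum.cong)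
  also have "(\<Sum>j'\<in>{..<d}-{s}. id_mat j j' * X j' k) = (if j = s then 0 else if j < d then X j k else 0)"
    by (simp add: id_mat_mult_left)
  finally show ?thesis by simp
qed

lemma mat_mul_row_elim:
  assumes "s < d"
  shows "mat_mul d X (row_elim s w) j k = (if k = s then 0 else if k < d then X j k else 0) + X j s * w k"
proof -
  have "mat_mul d X (row_elim s w) j k = X j s * w k + (\<Sum>k'\<in>{..<d}-{s}. X j k' * id_mat k' k)"
    unfolding mat_mul_def row_elim_def using assms
    by (subst sum_split_at[OF assms]) (auto intro!: sum.cong)
  also have "(\<Sum>k'\<in>{..<d}-{s}. X j k' * id_mat k' k) = (if k = s then 0 else if k < d then X j k else 0)"
    by (simp add: id_mat_mult_right)
  finally show ?thesis by simp
qed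

lemma inverse_pair_col_elim:
  assumes "s < d" "c s \<noteq> 0"
  shows "inverse_pair d (col_elim s c) (col_elim s (elim_inv s c))"
  unfolding inverse_pair_def mat_mul_col_elim[OF assms(1)]
  using assms by (auto simp: col_elim_def elim_inv_def id_mat_def field_simps)

lemma inverse_pair_row_elim:
  assumes "s < d" "w s \<noteq> 0"
  shows "inverse_pair d (row_elim s w) (row_elim s (elim_inv s w))"
  unfolding inverse_pair_def mat_mul_row_elim[OF assms(1)]
  using assms by (auto simp: row_elim_def elim_inv_def id_mat_def field_simps)

text \<open>The elimination invariant: the first s rows and columns of M agree with those of
  \<open>diag_ones s\<close>.\<close>
definition identity_block :: "nat \<Rightarrow> nat \<Rightarrow> nat \<Rightarrow> (nat \<Rightarrow> nat \<Rightarrow> complex) \<Rightarrow> bool" where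
  "identity_block d2 d3 s M \<longleftrightarrow> (\<forall>j<d2. \<forall>k<d3. (j < s \<or> k < s) \<longrightarrow> M j k = diag_ones s j k)"

lemma identity_block_swap:
  assumes blk: "identity_block d2 d3 s M" and j0: "s \<le> j0" "j0 < d2" and k0: "s \<le> k0" "k0 < d3"
  shows "identity_block d2 d3 s (\<lambda>j k. M (swap_idx s j0 j) (swap_idx s k0 k))"
  unfolding identity_block_def
proof (intro allI impI)
  fix j k assume jk: "j < d2" "k < d3" and c: "j < s \<or> k < s"
  have sd: "s < d2" "s < d3" using j0 k0 by auto
  have box: "swap_idx s j0 j < d2" "swap_idx s k0 k < d3" using swap_idx_less sd j0 k0 jk by blast+
  show "M (swap_idx s j0 j) (swap_idx s k0 k) = diag_ones s j k"
  proof (cases "j < s")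
    case True
    then have "swap_idx s j0 j = j" "(swap_idx s k0 k = j) = (k = j)" using j0 k0 unfolding swap_idx_def by auto
    then show ?thesis using blk box True unfolding identity_block_def diag_ones_def by auto
  next
    case False
    then have ks: "k < s" using c by auto
    then have "swap_idx s k0 k = k" "(swap_idx s j0 j = k) = (j = k)" using j0 k0 unfolding swap_idx_def by auto
    then show ?thesis using blk box ks unfolding identity_block_def diag_ones_def by auto
  qed
qed

lemma pivot_elimination:
  assumes blk: "identity_block d2 d3 s M" and sd: "s < d2" "s < d3" and a: "M s s \<noteq> 0"
  shows "\<exists>M2 P P' Q Q'. identity_block d2 d3 (Suc s) M2 \<and> inverse_pair d2 P P' \<and> inverse_pair d3 Q Q' \<and>
    box_eq d2 d3 (mat_mul d3 (mat_mul d2 P M2) Q) M"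
proof -
  define M2 where "M2 j k = (if j = s \<or> k = s then id_mat j k else M j k - M j s * M s k / M s s)" for j k
  define c where "c j = M j s" for j
  define w where "w k = M s k / M s s" for k
  have "identity_block d2 d3 (Suc s) M2"
    unfolding identity_block_def
  proof (intro allI impI)
    fix j k assume jk: "j < d2" "k < d3" and "j < Suc s \<or> k < Suc s"
    show "M2 j k = diag_ones (Suc s) j k"
    proof (cases "j = s \<or> k = s")
      case True then show ?thesis unfolding M2_def diag_ones_def id_mat_def by auto
    next
      case False
      then have c': "j < s \<or> k < s" using \<open>j < Suc s \<or> k < Suc s\<close> by auto
      have "M j s * M s k = 0"
        using blk jk sd c' unfolding identity_block_def diag_ones_def by (metis less_irrefl mult_eq_0_iff)
      then have "M2 j k = M j k" using False unfolding M2_def by simp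
      also have "\<dots> = diag_ones s j k" using blk jk c' unfolding identity_block_def by auto
      also have "\<dots> = diag_ones (Suc s) j k" using c' False unfolding diag_ones_def by auto
      finally show ?thesis .
    qed
  qed
  moreover have "inverse_pair d2 (col_elim s c) (col_elim s (elim_inv s c))"
    using inverse_pair_col_elim sd a by (simp add: c_def)
  moreover have "inverse_pair d3 (row_elim s w) (row_elim s (elim_inv s w))"
    using inverse_pair_row_elim sd a by (simp add: w_def)
  moreover have "box_eq d2 d3 (mat_mul d3 (mat_mul d2 (col_elim s c) M2) (row_elim s w)) M"
    unfolding box_eq_def mat_mul_row_elim[OF sd(2)] mat_mul_col_elim[OF sd(1)]
    using a by (auto simp: M2_def c_def w_def id_mat_def field_simps)
  ultimately show ?thesis by blast
qed

lemma elimination_step: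
  assumes blk: "identity_block d2 d3 s M" and j0: "s \<le> j0" "j0 < d2" and k0: "s \<le> k0" "k0 < d3"
    and nz: "M j0 k0 \<noteq> 0"
  shows "\<exists>M2 P P' Q Q'. identity_block d2 d3 (Suc s) M2 \<and> inverse_pair d2 P P' \<and> inverse_pair d3 Q Q' \<and>
    box_eq d2 d3 (mat_mul d3 (mat_mul d2 P M2) Q) M"
proof -
  have sd: "s < d2" "s < d3" using j0 k0 by auto
  define M1 where "M1 j k = M (swap_idx s j0 j) (swap_idx s k0 k)" for j k
  have "M1 s s \<noteq> 0" using nz unfolding M1_def swap_idx_def by simp
  then obtain M2 P P' Q Q' where M2: "identity_block d2 d3 (Suc s) M2"
    and P: "inverse_pair d2 P P'" and Q: "inverse_pair d3 Q Q'"
    and eq1: "box_eq d2 d3 (mat_mul d3 (mat_mul d2 P M2) Q) M1"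
    using pivot_elimination[OF identity_block_swap[OF blk j0 k0] sd] unfolding M1_def by blast
  have eq0: "box_eq d2 d3 (mat_mul d3 (mat_mul d2 (swap_mat s j0) M1) (swap_mat s k0)) M"
    unfolding box_eq_def using sd j0 k0 by (simp add: mat_mul_swap_left mat_mul_swap_right M1_def swap_idx_less)
  have "box_eq d2 d3 (mat_mul d3 (mat_mul d2 (mat_mul d2 (swap_mat s j0) P) M2) (mat_mul d3 Q (swap_mat s k0))) M"
    using box_eq_trans[OF box_eq_mul[OF eq1] eq0] by (simp add: mat_mul_assoc)
  moreover have "inverse_pair d2 (mat_mul d2 (swap_mat s j0) P) (mat_mul d2 P' (swap_mat s j0))"
    using inverse_pair_mul[OF inverse_pair_swap P] sd j0 by simp
  moreover have "inverse_pair d3 (mat_mul d3 Q (swap_mat s k0)) (mat_mul d3 (swap_mat s k0) Q')"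
    using inverse_pair_mul[OF Q inverse_pair_swap] sd k0 by simp
  ultimately show ?thesis using M2 by blast
qed

lemma rank_normal_form_from:
  "n = min d2 d3 - s \<Longrightarrow> identity_block d2 d3 s M \<Longrightarrow> s \<le> min d2 d3 \<Longrightarrow>
   \<exists>r P P' Q Q'. s \<le> r \<and> r \<le> min d2 d3 \<and> inverse_pair d2 P P' \<and> inverse_pair d3 Q Q' \<and>
     box_eq d2 d3 (mat_mul d3 (mat_mul d2 P (diag_ones r)) Q) M"
proof (induction n arbitrary: s M rule: less_induct)
  case (less n s M)
  show ?case
  proof (cases "\<forall>j<d2. \<forall>k<d3. s \<le> j \<longrightarrow> s \<le> k \<longrightarrow> M j k = 0")
    case True
    have "M j k = diag_ones s j k" if "j < d2" "k < d3" for j k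
    proof (cases "j < s \<or> k < s")
      case True
      then show ?thesis using less.prems(2) that unfolding identity_block_def by blast
    next
      case False
      then show ?thesis using \<open>\<forall>j<d2. \<forall>k<d3. s \<le> j \<longrightarrow> s \<le> k \<longrightarrow> M j k = 0\<close> that
        by (simp add: diag_ones_def)
    qed
    then have "box_eq d2 d3 (mat_mul d3 (mat_mul d2 id_mat (diag_ones s)) id_mat) M"
      unfolding box_eq_def by (simp add: mat_mul_id_left mat_mul_id_right)
    then show ?thesis using inverse_pair_id less.prems(3) by blast
  next
    case False
    then obtain j0 k0 where j0: "s \<le> j0" "j0 < d2" and k0: "s \<le> k0" "k0 < d3" and "M j0 k0 \<noteq> 0"
      by auto
    then obtain M2 P1 P1' Q1 Q1' where M2: "identity_block d2 d3 (Suc s) M2"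
      and P1: "inverse_pair d2 P1 P1'" and Q1: "inverse_pair d3 Q1 Q1'"
      and eq1: "box_eq d2 d3 (mat_mul d3 (mat_mul d2 P1 M2) Q1) M"
      using elimination_step[OF less.prems(2)] by blast
    have "min d2 d3 - Suc s < n" "Suc s \<le> min d2 d3" using less.prems(1) j0 k0 by auto
    then obtain r P2 P2' Q2 Q2' where r: "Suc s \<le> r" "r \<le> min d2 d3"
      and P2: "inverse_pair d2 P2 P2'" and Q2: "inverse_pair d3 Q2 Q2'"
      and eq2: "box_eq d2 d3 (mat_mul d3 (mat_mul d2 P2 (diag_ones r)) Q2) M2"
      using less.IH[OF _ refl M2] by blast
    have "box_eq d2 d3 (mat_mul d3 (mat_mul d2 (mat_mul d2 P1 P2) (diag_ones r)) (mat_mul d3 Q2 Q1)) M"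
      using box_eq_trans[OF box_eq_mul[OF eq2] eq1] by (simp add: mat_mul_assoc)
    then show ?thesis using r inverse_pair_mul[OF P1 P2] inverse_pair_mul[OF Q2 Q1]
      by (intro exI conjI) auto
  qed
qed

lemma rank_normal_form:
  assumes "\<exists>j<d2. \<exists>k<d3. M j k \<noteq> 0"
  shows "\<exists>r P P' Q Q'. 1 \<le> r \<and> r \<le> min d2 d3 \<and> inverse_pair d2 P P' \<and> inverse_pair d3 Q Q' \<and>
     box_eq d2 d3 (mat_mul d3 (mat_mul d2 P (diag_ones r)) Q) M"
proof -
  have "identity_block d2 d3 0 M" by (simp add: identity_block_def)
  then obtain r P P' Q Q' where nf: "r \<le> min d2 d3" "inverse_pair d2 P P'" "inverse_pair d3 Q Q'"
    "box_eq d2 d3 (mat_mul d3 (mat_mul d2 P (diag_ones r)) Q) M"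
    using rank_normal_form_from[OF refl] by blast
  have "r \<noteq> 0"
  proof
    assume "r = 0"
    then have "\<forall>j<d2. \<forall>k<d3. M j k = 0" using nf(4) unfolding box_eq_def mat_mul_def diag_ones_def by auto
    then show False using assms by auto
  qed
  then show ?thesis using nf by (intro exI[of _ r]) auto
qed

section \<open>Every state lies below a canonical state\<close>

lemma sandwich_adj_transpose:
  "sandwich_adj d2 d3 (\<lambda>i j. P j i) Q M = mat_mul d3 (mat_mul d2 P M) Q"
  unfolding sandwich_adj_def mat_mul_def
  by (intro ext) (subst sum.swap, simp add: sum_distrib_right sum_distrib_left mult_ac)

lemma pairing_box_eq: "box_eq d2 d3 M M' \<Longrightarrow> pairing d2 d3 M X = pairing d2 d3 M' X"
  unfolding pairing_def box_eq_def by (auto intro!: sum.cong)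

text \<open>For \<open>d1 = d2 d3 - 1\<close> every state is below some canonical state: its slices are
  annihilated by a nonzero matrix \<open>M = P diag_ones r Q\<close>, and after applying \<open>P\<^sup>T\<close> and \<open>Q\<close>
  on parties 2 and 3 they lie in the hyperplane \<open>diag_ones r\<^sup>\<bottom>\<close>, the slice span of \<open>\<Phi>_r\<close>.\<close>
lemma below_canonical_state:
  assumes d1: "Suc d1 = d2 * d3" and \<phi>: "\<phi> \<in> tensor3 d1 d2 d3"
  shows "\<exists>r. 1 \<le> r \<and> r \<le> min d2 d3 \<and> slocc_le d1 d2 d3 \<phi> (canonical_state d1 d2 d3 r)"
proof -
  obtain M where M_nz: "\<exists>j<d2. \<exists>k<d3. M j k \<noteq> 0" and M_ann: "\<forall>i<d1. pairing d2 d3 M (\<phi> i) = 0"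
    using annihilating_matrix_exists[of d1 d2 d3 \<phi>] d1 by auto
  obtain r P P' Q Q' where r: "1 \<le> r" "r \<le> min d2 d3"
    and P: "inverse_pair d2 P P'" and Q: "inverse_pair d3 Q Q'"
    and nf: "box_eq d2 d3 (mat_mul d3 (mat_mul d2 P (diag_ones r)) Q) M"
    using rank_normal_form[OF M_nz] by blast
  define A where "A = (\<lambda>i j. P j i)"
  define \<phi>1 where "\<phi>1 = local_op d1 d2 d3 id_mat A Q \<phi>"
  have "\<phi>1 a \<in> slice_span d1 (canonical_state d1 d2 d3 r)" if a: "a < d1" for a
  proof -
    have slice: "\<phi>1 a = sandwich d2 d3 A Q (\<phi> a)" unfolding \<phi>1_def using a by (rule local_op_slice_id)
    have "pairing d2 d3 (diag_ones r) (\<phi>1 a) = pairing d2 d3 M (\<phi> a)"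
      unfolding slice pairing_sandwich A_def sandwich_adj_transpose by (rule pairing_box_eq[OF nf])
    then have "\<phi>1 a \<in> hyperplane d2 d3 (diag_ones r)"
      using M_ann a unfolding hyperplane_def slice by (simp add: supported_sandwich)
    then show ?thesis using span_canonical_state[OF d1 r(1)] by simp
  qed
  then have "slocc_le d1 d2 d3 \<phi>1 (canonical_state d1 d2 d3 r)"
    unfolding \<phi>1_def by (intro slocc_le_if_slices_in_span local_op_tensor3) auto
  moreover have "slocc_le d1 d2 d3 \<phi> \<phi>1"
    using local_op_undo[OF \<phi> inverse_pair_transpose[OF P] Q] unfolding slocc_le_def \<phi>1_def A_def by metis
  ultimately show ?thesis using r slocc_le_trans by blast
qed

lemma slocc_equiv_rel_equiv: "equiv (maximal_states d1 d2 d3) (slocc_equiv_rel d1 d2 d3)"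
proof (rule equivI)
  show "refl_on (maximal_states d1 d2 d3) (slocc_equiv_rel d1 d2 d3)"
    unfolding refl_on_def slocc_equiv_rel_def slocc_equiv_def maximal_states_def slocc_maximal_def
    using slocc_le_refl by auto
  show "sym (slocc_equiv_rel d1 d2 d3)"
    unfolding sym_def slocc_equiv_rel_def slocc_equiv_def by auto
  show "trans (slocc_equiv_rel d1 d2 d3)"
    unfolding trans_def slocc_equiv_rel_def slocc_equiv_def using slocc_le_trans by blast
  show "slocc_equiv_rel d1 d2 d3 \<subseteq> maximal_states d1 d2 d3 \<times> maximal_states d1 d2 d3"
    unfolding slocc_equiv_rel_def by auto
qed

lemma maximal_classes:
  assumes d1: "Suc d1 = d2 * d3" and d: "2 \<le> d2" "2 \<le> d3"
  shows "maximal_states d1 d2 d3 // slocc_equiv_rel d1 d2 d3 =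
    (\<lambda>r. slocc_equiv_rel d1 d2 d3 `` {canonical_state d1 d2 d3 r}) ` {1..min d2 d3}"
    (is "?A // ?R = ?cls ` ?I")
proof
  have canonical: "canonical_state d1 d2 d3 r \<in> ?A" if "1 \<le> r" for r
    using canonical_state_maximal[OF d1 d that] unfolding maximal_states_def by simp
  show "?cls ` ?I \<subseteq> ?A // ?R" using canonical by (auto intro: quotientI)
  show "?A // ?R \<subseteq> ?cls ` ?I"
  proof
    fix X assume "X \<in> ?A // ?R"
    then obtain \<phi> where \<phi>: "\<phi> \<in> ?A" and X: "X = ?R `` {\<phi>}" by (rule quotientE)
    then have max: "slocc_maximal d1 d2 d3 \<phi>" by (simp add: maximal_states_def)
    then obtain r where r: "1 \<le> r" "r \<le> min d2 d3" and le: "slocc_le d1 d2 d3 \<phi> (canonical_state d1 d2 d3 r)"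
      using below_canonical_state[OF d1] unfolding slocc_maximal_def by blast
    then have "slocc_le d1 d2 d3 (canonical_state d1 d2 d3 r) \<phi>"
      using max canonical_state_tensor3 unfolding slocc_maximal_def by blast
    then have "(\<phi>, canonical_state d1 d2 d3 r) \<in> ?R"
      using \<phi> canonical[OF r(1)] le unfolding slocc_equiv_rel_def slocc_equiv_def by simp
    then have "X = ?cls r" unfolding X by (rule equiv_class_eq[OF slocc_equiv_rel_equiv])
    then show "X \<in> ?cls ` ?I" using r by auto
  qed
qed

lemma canonical_classes_distinct:
  assumes d1: "Suc d1 = d2 * d3" and d: "2 \<le> d2" "2 \<le> d3"
  shows "inj_on (\<lambda>r. slocc_equiv_rel d1 d2 d3 `` {canonical_state d1 d2 d3 r}) {1..min d2 d3}"
proof (rule inj_onI)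
  fix r s assume r: "r \<in> {1..min d2 d3}" and s: "s \<in> {1..min d2 d3}"
    and eq: "slocc_equiv_rel d1 d2 d3 `` {canonical_state d1 d2 d3 r} =
             slocc_equiv_rel d1 d2 d3 `` {canonical_state d1 d2 d3 s}"
  have canonical: "canonical_state d1 d2 d3 t \<in> maximal_states d1 d2 d3" if "1 \<le> t" for t
    using canonical_state_maximal[OF d1 d that] unfolding maximal_states_def by simp
  have "(canonical_state d1 d2 d3 r, canonical_state d1 d2 d3 s) \<in> slocc_equiv_rel d1 d2 d3"
    using eq eq_equiv_class_iff[OF slocc_equiv_rel_equiv canonical canonical] r s by auto
  then have "slocc_le d1 d2 d3 (canonical_state d1 d2 d3 r) (canonical_state d1 d2 d3 s)"
    "slocc_le d1 d2 d3 (canonical_state d1 d2 d3 s) (canonical_state d1 d2 d3 r)"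
    unfolding slocc_equiv_rel_def slocc_equiv_def by auto
  then show "r = s"
    using canonical_state_le_rank[OF d1 d] r s by (meson atLeastAtMost_iff le_antisym)
qed

theorem mainTheorem6:
  fixes d1 d2 d3 :: nat
  assumes "d2 \<ge> 2" and "d3 \<ge> 2" and "d1 = d2 * d3 - 1"
  shows "finite (maximal_states d1 d2 d3 // slocc_equiv_rel d1 d2 d3) \<and>
         card (maximal_states d1 d2 d3 // slocc_equiv_rel d1 d2 d3) = min d2 d3"
proof -
  have d1: "Suc d1 = d2 * d3"
    using assms by (metis Suc_pred' nat_0_less_mult_iff less_le_trans pos2)
  show ?thesis
    unfolding maximal_classes[OF d1 assms(1,2)]
    using card_image[OF canonical_classes_distinct[OF d1 assms(1,2)]] by simp
qed

end
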